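(* Let $p$ be a prime and let $A$, $B$ be $p$-groups with $|A|=p^a$, $|B|=p^b$, $a,b\ge1$. Suppose the maximum order of an element of $A$ is $p^d$ and the maximum order of an element of $B$ is $p^e$. Then the maximum order of an element of $A\wr B$ is $p^{d+e}$, and for every integer $k$, $$r_{A\wr B,k}=\sum_{i=0}^{e}\left(r_{B,i}-r_{B,i+1}\right)r_{A,k-i}^{\,p^{b-e+i}}.$$
   Context: For a finite $p$-group $G$ with $|G|=p^g$ and maximum element order $p^{f}$, and for $k\in\mathbb{Z}$, define $r_{G,k}=\frac{1}{p^g}\cdot\#\{x\in G:\ \mathrm{order}(x)\le p^{f-k}\}$ (so $r_{G,k}=1$ for $k\le 0$ and $r_{G,k}=0$ for $k>f$). For groups $A,B$, let $K=\prod_{b\in B}A$, on which $B$ acts by $x\cdot(\alpha_b)_b=(\alpha_{x^{-1}b})_b$ for $x\in B$; the wreath product $A\wr B$ is the semidirect product $K\rtimes B$ for this action. *)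

theory Defs
  imports "HOL-Algebra.Algebra"
begin

definition max_elem_ord :: "('a, 'b) monoid_scheme \<Rightarrow> nat" where
  "max_elem_ord G = Max (group.ord G ` carrier G)"

text \<open>r_{G,k}: proportion of elements x with ord x \<le> p^(f-k), where p^f is the
  maximum element order; p^(f-k) = max_elem_ord G * p powi (-k).\<close>
definition r_ratio :: "nat \<Rightarrow> ('a, 'b) monoid_scheme \<Rightarrow> int \<Rightarrow> real" where
  "r_ratio p G k =
     real (card {x \<in> carrier G. real (group.ord G x) \<le> real (max_elem_ord G) * (real p) powi (- k)})
     / real (card (carrier G))"

text \<open>Wreath product A wr B = K \<rtimes> B with K = functions carrier B \<rightarrow> carrier A,
  action (x\<cdot>\<alpha>)_b = \<alpha>_{x^{-1} b}; so (\<alpha>,x)(\<beta>,y) = (\<alpha>\<cdot>(x\<cdot>\<beta>), xy).\<close>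
definition wreath :: "('a, 'c) monoid_scheme \<Rightarrow> ('b, 'd) monoid_scheme \<Rightarrow> (('b \<Rightarrow> 'a) \<times> 'b) monoid" where
  "wreath A B =
    \<lparr> carrier = (carrier B \<rightarrow>\<^sub>E carrier A) \<times> carrier B,
      monoid.mult = (\<lambda>(f, x) (g, y). ((\<lambda>b\<in>carrier B. f b \<otimes>\<^bsub>A\<^esub> g (inv\<^bsub>B\<^esub> x \<otimes>\<^bsub>B\<^esub> b)), x \<otimes>\<^bsub>B\<^esub> y)),
      one = ((\<lambda>b\<in>carrier B. \<one>\<^bsub>A\<^esub>), \<one>\<^bsub>B\<^esub>) \<rparr>"

end

theory Submission
  imports Defs
begin

text \<open>
  Write the elements of A wr B as pairs (\<alpha>, x). If x has order n, then
  (\<alpha>, x)^(q n) = (\<beta>^q, 1), where \<beta> b = \<alpha> b \<alpha> (x^-1 b) ... \<alpha> (x^-(n-1) b) is the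
  product of \<alpha> along the orbit of b under x^-1; so (\<alpha>, x)^N = 1 iff n divides N and
  every \<beta> b is killed by N / n. Moving b one step along its orbit conjugates \<beta> b, so for
  a conjugation-invariant set S the condition "\<beta> b \<in> S for all b" only has to be checked
  at one point of each of the |B| / n right cosets of \<langle>x\<rangle>, where it says that a product
  of n otherwise free values of \<alpha> lies in S. Hence exactly (|S| |A|^(n-1))^(|B|/n)
  functions \<alpha> qualify. With S the set of elements of A of order at most p^j, grouping the
  x by their order gives the formula for r; the maximal order p^(d+e) is attained at (\<alpha>, x)
  with x of order p^e and \<alpha> supported at 1 with a value of order p^d.
\<close>

section \<open>Extensional function spaces\<close>

lemma bij_betw_PiE_reindex:
  assumes "bij_betw h I J"
  shows "bij_betw (\<lambda>g. restrict (g \<circ> h) I) (J \<rightarrow>\<^sub>E Y) (I \<rightarrow>\<^sub>E Y)"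
proof (rule bij_betw_byWitness[where f' = "\<lambda>f. restrict (f \<circ> inv_into I h) J"])
  have h: "h ` I = J" "inj_on h I" using assms by (auto simp: bij_betw_def)
  show "\<forall>g\<in>J \<rightarrow>\<^sub>E Y. restrict (restrict (g \<circ> h) I \<circ> inv_into I h) J = g"
    using h by (auto simp: fun_eq_iff PiE_iff extensional_def f_inv_into_f inv_into_into)
  show "\<forall>f\<in>I \<rightarrow>\<^sub>E Y. restrict (restrict (f \<circ> inv_into I h) J \<circ> h) I = f"
    using h by (auto simp: fun_eq_iff PiE_iff extensional_def)
  show "(\<lambda>g. restrict (g \<circ> h) I) ` (J \<rightarrow>\<^sub>E Y) \<subseteq> I \<rightarrow>\<^sub>E Y"
    using h by auto
  show "(\<lambda>f. restrict (f \<circ> inv_into I h) J) ` (I \<rightarrow>\<^sub>E Y) \<subseteq> J \<rightarrow>\<^sub>E Y"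
    using h by (auto simp: inv_into_into)
qed

lemma bij_betw_PiE_partition:
  assumes disj: "disjoint Cs" and D: "\<Union>Cs = D"
  shows "bij_betw (\<lambda>f. \<lambda>C\<in>Cs. restrict f C) (D \<rightarrow>\<^sub>E Y) (\<Pi>\<^sub>E C\<in>Cs. C \<rightarrow>\<^sub>E Y)"
proof (rule bij_betw_byWitness[where f' = "\<lambda>\<phi>. \<lambda>x\<in>D. \<phi> (THE C. C \<in> Cs \<and> x \<in> C) x"])
  have block: "(THE C. C \<in> Cs \<and> x \<in> C) = C" if "C \<in> Cs" "x \<in> C" for C x
    by (rule the_equality) (use that disj in \<open>auto simp: disjoint_def\<close>)
  have in_block: "\<exists>C\<in>Cs. x \<in> C \<and> (THE C. C \<in> Cs \<and> x \<in> C) = C" if "x \<in> D" for x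
    using that D block by blast
  show "\<forall>f\<in>D \<rightarrow>\<^sub>E Y. (\<lambda>x\<in>D. (\<lambda>C\<in>Cs. restrict f C) (THE C. C \<in> Cs \<and> x \<in> C) x) = f"
  proof (intro ballI ext)
    fix f x assume f: "f \<in> D \<rightarrow>\<^sub>E Y"
    show "(\<lambda>x\<in>D. (\<lambda>C\<in>Cs. restrict f C) (THE C. C \<in> Cs \<and> x \<in> C) x) x = f x"
      using in_block[of x] PiE_arb[OF f, of x] by (cases "x \<in> D") auto
  qed
  show "\<forall>\<phi>\<in>\<Pi>\<^sub>E C\<in>Cs. C \<rightarrow>\<^sub>E Y. (\<lambda>C\<in>Cs. restrict (\<lambda>x\<in>D. \<phi> (THE C. C \<in> Cs \<and> x \<in> C) x) C) = \<phi>"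
  proof (intro ballI ext)
    fix \<phi> C x assume \<phi>: "\<phi> \<in> (\<Pi>\<^sub>E C\<in>Cs. C \<rightarrow>\<^sub>E Y)"
    show "(\<lambda>C\<in>Cs. restrict (\<lambda>x\<in>D. \<phi> (THE C. C \<in> Cs \<and> x \<in> C) x) C) C x = \<phi> C x"
    proof (cases "C \<in> Cs")
      case True
      then show ?thesis
        using D block[OF True] PiE_arb[OF PiE_mem[OF \<phi> True], of x] by auto
    qed (use PiE_arb[OF \<phi>] in auto)
  qed
  show "(\<lambda>f. \<lambda>C\<in>Cs. restrict f C) ` (D \<rightarrow>\<^sub>E Y) \<subseteq> (\<Pi>\<^sub>E C\<in>Cs. C \<rightarrow>\<^sub>E Y)"
    using D by auto
  show "(\<lambda>\<phi>. \<lambda>x\<in>D. \<phi> (THE C. C \<in> Cs \<and> x \<in> C) x) ` (\<Pi>\<^sub>E C\<in>Cs. C \<rightarrow>\<^sub>E Y) \<subseteq> D \<rightarrow>\<^sub>E Y"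
  proof (rule image_subsetI)
    fix \<phi> assume \<phi>: "\<phi> \<in> (\<Pi>\<^sub>E C\<in>Cs. C \<rightarrow>\<^sub>E Y)"
    show "(\<lambda>x\<in>D. \<phi> (THE C. C \<in> Cs \<and> x \<in> C) x) \<in> D \<rightarrow>\<^sub>E Y"
      unfolding restrict_PiE_iff
    proof
      fix x assume "x \<in> D"
      then obtain C where "C \<in> Cs" "x \<in> C" "(THE C. C \<in> Cs \<and> x \<in> C) = C"
        using in_block by blast
      then show "\<phi> (THE C. C \<in> Cs \<and> x \<in> C) x \<in> Y"
        using PiE_mem[OF PiE_mem[OF \<phi>]] by auto
    qed
  qed
qed

lemma card_eq_sum_card_fibers:
  assumes "finite U" "finite V" "S \<subseteq> U \<times> V"
  shows "card S = (\<Sum>y\<in>V. card {x \<in> U. (x, y) \<in> S})"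
proof -
  let ?swap = "\<lambda>(y, x). (x, y)" and ?fibers = "SIGMA y:V. {x \<in> U. (x, y) \<in> S}"
  have "?swap ` ?fibers = S"
    using assms(3) by (auto simp: image_iff)
  then have "card S = card (?swap ` ?fibers)" by simp
  also have "\<dots> = card ?fibers"
    by (rule card_image) (auto intro: inj_onI)
  also have "\<dots> = (\<Sum>y\<in>V. card {x \<in> U. (x, y) \<in> S})"
    using assms(1,2) by (simp add: card_SigmaI)
  finally show ?thesis .
qed

section \<open>Ordered products in a group\<close>

text \<open>An ordered product, since finprod needs a commutative monoid.\<close>

primrec seq_prod :: "('a, 'b) monoid_scheme \<Rightarrow> (nat \<Rightarrow> 'a) \<Rightarrow> nat \<Rightarrow> 'a" where
  "seq_prod G f 0 = \<one>\<^bsub>G\<^esub>"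
| "seq_prod G f (Suc n) = seq_prod G f n \<otimes>\<^bsub>G\<^esub> f n"

context group
begin

lemma seq_prod_closed: "(\<And>s. s < n \<Longrightarrow> f s \<in> carrier G) \<Longrightarrow> seq_prod G f n \<in> carrier G"
  by (induction n) auto

lemma seq_prod_cong: "(\<And>s. s < n \<Longrightarrow> f s = g s) \<Longrightarrow> seq_prod G f n = seq_prod G g n"
  by (induction n) auto

lemma seq_prod_add:
  assumes "\<And>s. s < m + n \<Longrightarrow> f s \<in> carrier G"
  shows "seq_prod G f (m + n) = seq_prod G f m \<otimes> seq_prod G (\<lambda>s. f (m + s)) n"
  using assms
proof (induction n)
  case 0
  then show ?case by (simp add: seq_prod_closed)
next
  case (Suc n)
  then show ?case by (simp add: m_assoc seq_prod_closed)
qed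

lemma seq_prod_Suc_left:
  assumes "\<And>s. s \<le> n \<Longrightarrow> f s \<in> carrier G"
  shows "seq_prod G f (Suc n) = f 0 \<otimes> seq_prod G (\<lambda>s. f (Suc s)) n"
  using seq_prod_add[of 1 n f] assms by simp

lemma seq_prod_periodic:
  assumes "\<And>s. f (s + n) = f s" and "\<And>s. f s \<in> carrier G"
  shows "seq_prod G f (q * n) = seq_prod G f n [^] q"
proof (induction q)
  case 0
  then show ?case by simp
next
  case (Suc q)
  have shift: "(\<lambda>s. f (n + s)) = f" using assms(1) by (simp add: add.commute)
  have "seq_prod G f (Suc q * n) = seq_prod G f n \<otimes> seq_prod G f (q * n)"
    using seq_prod_add[of n "q * n" f] assms(2) by (simp add: shift)
  also have "\<dots> = seq_prod G f n [^] Suc q"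
    using Suc assms(2) by (subst nat_pow_Suc2) (simp_all add: seq_prod_closed)
  finally show ?case .
qed

lemma seq_prod_eq_first:
  assumes "0 < n" "f 0 \<in> carrier G" "\<And>s. 0 < s \<Longrightarrow> s < n \<Longrightarrow> f s = \<one>"
  shows "seq_prod G f n = f 0"
  using assms
proof (induction n)
  case (Suc n)
  then show ?case by (cases n) auto
qed simp

lemma card_mult_left_in:
  assumes "c \<in> carrier G" "S \<subseteq> carrier G"
  shows "card {a \<in> carrier G. c \<otimes> a \<in> S} = card S"
proof -
  have "bij_betw (\<lambda>a. c \<otimes> a) {a \<in> carrier G. c \<otimes> a \<in> S} S"
  proof (rule bij_betwI[where g = "\<lambda>s. inv c \<otimes> s"])
  qed (use assms in \<open>auto simp: m_assoc[symmetric]\<close>)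
  then show ?thesis by (rule bij_betw_same_card)
qed

lemma card_seq_prod_in:
  assumes fin: "finite (carrier G)" and S: "S \<subseteq> carrier G"
  shows "card {f \<in> {..<Suc m} \<rightarrow>\<^sub>E carrier G. seq_prod G f (Suc m) \<in> S}
    = card S * card (carrier G) ^ m"
proof -
  let ?pairs = "{z \<in> carrier G \<times> ({..<m} \<rightarrow>\<^sub>E carrier G). seq_prod G (snd z) m \<otimes> fst z \<in> S}"
  have "bij_betw (\<lambda>(a, g). g(m := a)) (carrier G \<times> ({..<m} \<rightarrow>\<^sub>E carrier G)) ({..<Suc m} \<rightarrow>\<^sub>E carrier G)"
    unfolding lessThan_Suc by (rule bij_betw_imageI[OF inj_combinator PiE_insert_eq[symmetric]]) simp
  moreover have "seq_prod G (g(m := a)) (Suc m) = seq_prod G g m \<otimes> a" for g a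
    using seq_prod_cong[of m "g(m := a)" g] by simp
  ultimately have "bij_betw (\<lambda>(a, g). g(m := a)) ?pairs
      {f \<in> {..<Suc m} \<rightarrow>\<^sub>E carrier G. seq_prod G f (Suc m) \<in> S}"
    by (intro bij_betw_Collect) auto
  then have "card {f \<in> {..<Suc m} \<rightarrow>\<^sub>E carrier G. seq_prod G f (Suc m) \<in> S} = card ?pairs"
    by (simp add: bij_betw_same_card)
  also have "\<dots> = (\<Sum>g\<in>{..<m} \<rightarrow>\<^sub>E carrier G. card {a \<in> carrier G. (a, g) \<in> ?pairs})"
    using fin by (intro card_eq_sum_card_fibers) (auto simp: finite_PiE)
  also have "\<dots> = (\<Sum>g\<in>{..<m} \<rightarrow>\<^sub>E carrier G. card S)"
  proof (rule sum.cong)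
    fix g assume g: "g \<in> {..<m} \<rightarrow>\<^sub>E carrier G"
    then have "seq_prod G g m \<in> carrier G" by (intro seq_prod_closed) auto
    moreover have "{a \<in> carrier G. (a, g) \<in> ?pairs} = {a \<in> carrier G. seq_prod G g m \<otimes> a \<in> S}"
      using g by auto
    ultimately show "card {a \<in> carrier G. (a, g) \<in> ?pairs} = card S"
      using card_mult_left_in[OF _ S] by simp
  qed simp
  also have "\<dots> = card S * card (carrier G) ^ m"
    using card_funcsetE[of "{..<m}" "carrier G"] by simp
  finally show ?thesis .
qed

lemma conj_pow:
  assumes "g \<in> carrier G" "h \<in> carrier G"
  shows "(inv g \<otimes> h \<otimes> g) [^] (n::nat) = inv g \<otimes> h [^] n \<otimes> g"
proof (induction n)
  case 0
  then show ?case using assms by simp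
next
  case (Suc n)
  have "(inv g \<otimes> h \<otimes> g) [^] Suc n = inv g \<otimes> (h [^] n \<otimes> (g \<otimes> inv g) \<otimes> h) \<otimes> g"
    using Suc assms by (simp add: m_assoc) (simp add: m_assoc[symmetric])
  also have "h [^] n \<otimes> (g \<otimes> inv g) \<otimes> h = h [^] Suc n"
    using assms by simp
  finally show ?case .
qed

lemma bij_betw_pow_rcos_generate:
  assumes fin: "finite (carrier G)" and y: "y \<in> carrier G" and t: "t \<in> carrier G"
  shows "bij_betw (\<lambda>s. y [^] s \<otimes> t) {..<ord y} (generate G {y} #> t)"
proof (rule bij_betw_imageI)
  have "ord y \<ge> 1" using ord_ge_1[OF fin y] .
  then have "generate G {y} = (\<lambda>s. y [^] s) ` {..<ord y}"
    using generate_pow_on_finite_carrier[OF fin y] ord_elems[OF fin y] by auto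
  then show "(\<lambda>s. y [^] s \<otimes> t) ` {..<ord y} = generate G {y} #> t"
    by (auto simp: r_coset_def)
  show "inj_on (\<lambda>s. y [^] s \<otimes> t) {..<ord y}"
  proof (rule inj_onI)
    fix r s assume "r \<in> {..<ord y}" "s \<in> {..<ord y}" "y [^] r \<otimes> t = y [^] s \<otimes> t"
    with y t ord_inj[OF y] show "r = s"
      by (auto simp: inj_on_def)
  qed
qed

lemma pow_mult_mem_rcos_generate:
  assumes fin: "finite (carrier G)" and y: "y \<in> carrier G"
    and C: "C \<in> rcosets (generate G {y})" and b: "b \<in> C"
  shows "y [^] (s::nat) \<otimes> b \<in> C"
proof -
  let ?H = "generate G {y}"
  have H: "subgroup ?H G" using y by (simp add: generate_is_subgroup)
  obtain t h where t: "t \<in> carrier G" "C = ?H #> t" and h: "h \<in> ?H" "b = h \<otimes> t"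
    using C b by (auto simp: RCOSETS_def r_coset_def)
  have "y [^] s \<in> ?H" using generate_pow_on_finite_carrier[OF fin y] by blast
  then have "y [^] s \<otimes> h \<in> ?H" using h(1) H by (simp add: subgroup.m_closed)
  moreover have "y [^] s \<otimes> b = (y [^] s \<otimes> h) \<otimes> t"
    using y t h H by (simp add: m_assoc subgroup.mem_carrier)
  ultimately show ?thesis using t by (auto simp: r_coset_def)
qed

end

section \<open>The wreath product\<close>

lemma wreath_carrier: "carrier (wreath A B) = (carrier B \<rightarrow>\<^sub>E carrier A) \<times> carrier B"
  by (simp add: wreath_def)

lemma wreath_one: "\<one>\<^bsub>wreath A B\<^esub> = ((\<lambda>b\<in>carrier B. \<one>\<^bsub>A\<^esub>), \<one>\<^bsub>B\<^esub>)"
  by (simp add: wreath_def)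

lemma wreath_mult:
  "(f, x) \<otimes>\<^bsub>wreath A B\<^esub> (g, y)
     = ((\<lambda>b\<in>carrier B. f b \<otimes>\<^bsub>A\<^esub> g (inv\<^bsub>B\<^esub> x \<otimes>\<^bsub>B\<^esub> b)), x \<otimes>\<^bsub>B\<^esub> y)"
  by (simp add: wreath_def)

text \<open>For y = inv x this is the map \<beta> of the proof idea, see wreath_pow_mult_ord.\<close>

definition orbit_prod :: "('a, 'c) monoid_scheme \<Rightarrow> ('b, 'd) monoid_scheme \<Rightarrow> 'b \<Rightarrow> ('b \<Rightarrow> 'a) \<Rightarrow> 'b \<Rightarrow> 'a"
  where "orbit_prod A B y \<alpha> b = seq_prod A (\<lambda>s. \<alpha> (y [^]\<^bsub>B\<^esub> s \<otimes>\<^bsub>B\<^esub> b)) (group.ord B y)"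

locale group_pair = A: group A + B: group B
  for A :: "('a, 'c) monoid_scheme" and B :: "('b, 'd) monoid_scheme"
begin

lemma wreath_group: "group (wreath A B)"
proof (rule groupI)
  show "x \<otimes>\<^bsub>wreath A B\<^esub> y \<in> carrier (wreath A B)"
    if "x \<in> carrier (wreath A B)" "y \<in> carrier (wreath A B)" for x y
    using that by (cases x; cases y) (auto simp: wreath_carrier wreath_mult PiE_iff)
  show "\<one>\<^bsub>wreath A B\<^esub> \<in> carrier (wreath A B)"
    by (auto simp: wreath_carrier wreath_one)
  show "x \<otimes>\<^bsub>wreath A B\<^esub> y \<otimes>\<^bsub>wreath A B\<^esub> z = x \<otimes>\<^bsub>wreath A B\<^esub> (y \<otimes>\<^bsub>wreath A B\<^esub> z)"
    if "x \<in> carrier (wreath A B)" "y \<in> carrier (wreath A B)" "z \<in> carrier (wreath A B)" for x y z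
    using that
    by (cases x; cases y; cases z)
       (auto simp: wreath_carrier wreath_mult PiE_iff A.m_assoc B.m_assoc B.inv_mult_group intro!: ext)
  show "\<one>\<^bsub>wreath A B\<^esub> \<otimes>\<^bsub>wreath A B\<^esub> x = x" if "x \<in> carrier (wreath A B)" for x
    using that
    by (cases x) (auto simp: wreath_carrier wreath_mult wreath_one PiE_iff extensional_def intro!: ext)
  show "\<exists>y\<in>carrier (wreath A B). y \<otimes>\<^bsub>wreath A B\<^esub> x = \<one>\<^bsub>wreath A B\<^esub>"
    if "x \<in> carrier (wreath A B)" for x
  proof -
    obtain f u where x: "x = (f, u)" by (cases x)
    with that have f: "f \<in> carrier B \<rightarrow>\<^sub>E carrier A" and u: "u \<in> carrier B"
      by (auto simp: wreath_carrier)
    let ?y = "((\<lambda>b\<in>carrier B. inv\<^bsub>A\<^esub> (f (u \<otimes>\<^bsub>B\<^esub> b))), inv\<^bsub>B\<^esub> u)"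
    have "?y \<in> carrier (wreath A B)" using f u by (auto simp: wreath_carrier PiE_iff)
    moreover have "?y \<otimes>\<^bsub>wreath A B\<^esub> x = \<one>\<^bsub>wreath A B\<^esub>"
      using f u by (auto simp: x wreath_mult wreath_one PiE_iff intro!: ext)
    ultimately show ?thesis by blast
  qed
qed

lemma card_wreath:
  assumes "finite (carrier A)" "finite (carrier B)"
  shows "card (carrier (wreath A B)) = card (carrier A) ^ card (carrier B) * card (carrier B)"
  using assms by (simp add: wreath_carrier card_cartesian_product card_funcsetE)

lemma wreath_pow:
  assumes \<alpha>: "\<alpha> \<in> carrier B \<rightarrow>\<^sub>E carrier A" and x: "x \<in> carrier B"
  shows "(\<alpha>, x) [^]\<^bsub>wreath A B\<^esub> (k::nat)
     = ((\<lambda>b\<in>carrier B. seq_prod A (\<lambda>s. \<alpha> (inv\<^bsub>B\<^esub> x [^]\<^bsub>B\<^esub> s \<otimes>\<^bsub>B\<^esub> b)) k), x [^]\<^bsub>B\<^esub> k)"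
proof (induction k)
  case 0
  then show ?case by (simp add: wreath_one restrict_def)
next
  case (Suc k)
  then show ?case
    using \<alpha> x by (simp add: wreath_mult B.nat_pow_inv PiE_iff fun_eq_iff)
qed

lemma wreath_pow_mult_ord:
  assumes \<alpha>: "\<alpha> \<in> carrier B \<rightarrow>\<^sub>E carrier A" and x: "x \<in> carrier B"
  shows "(\<alpha>, x) [^]\<^bsub>wreath A B\<^esub> (q * B.ord x)
     = ((\<lambda>b\<in>carrier B. orbit_prod A B (inv\<^bsub>B\<^esub> x) \<alpha> b [^]\<^bsub>A\<^esub> q), \<one>\<^bsub>B\<^esub>)"
proof -
  have "seq_prod A (\<lambda>s. \<alpha> (inv\<^bsub>B\<^esub> x [^]\<^bsub>B\<^esub> s \<otimes>\<^bsub>B\<^esub> b)) (q * B.ord x)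
      = orbit_prod A B (inv\<^bsub>B\<^esub> x) \<alpha> b [^]\<^bsub>A\<^esub> q" if b: "b \<in> carrier B" for b
    unfolding orbit_prod_def B.ord_inv[OF x]
  proof (rule A.seq_prod_periodic)
    fix s
    show "\<alpha> (inv\<^bsub>B\<^esub> x [^]\<^bsub>B\<^esub> (s + B.ord x) \<otimes>\<^bsub>B\<^esub> b) = \<alpha> (inv\<^bsub>B\<^esub> x [^]\<^bsub>B\<^esub> s \<otimes>\<^bsub>B\<^esub> b)"
      using x by (simp add: B.nat_pow_mult[symmetric] B.nat_pow_inv)
    show "\<alpha> (inv\<^bsub>B\<^esub> x [^]\<^bsub>B\<^esub> s \<otimes>\<^bsub>B\<^esub> b) \<in> carrier A"
      using \<alpha> x b by (auto simp: PiE_iff)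
  qed
  moreover have "x [^]\<^bsub>B\<^esub> (q * B.ord x) = \<one>\<^bsub>B\<^esub>"
    using x by (simp add: B.pow_eq_id)
  ultimately show ?thesis
    by (simp add: wreath_pow[OF \<alpha> x] fun_eq_iff)
qed

lemma wreath_pow_eq_one_iff:
  assumes fin: "finite (carrier B)"
    and \<alpha>: "\<alpha> \<in> carrier B \<rightarrow>\<^sub>E carrier A" and x: "x \<in> carrier B"
  shows "(\<alpha>, x) [^]\<^bsub>wreath A B\<^esub> N = \<one>\<^bsub>wreath A B\<^esub> \<longleftrightarrow>
    B.ord x dvd N \<and> (\<forall>b\<in>carrier B. orbit_prod A B (inv\<^bsub>B\<^esub> x) \<alpha> b [^]\<^bsub>A\<^esub> (N div B.ord x) = \<one>\<^bsub>A\<^esub>)"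
proof (cases "B.ord x dvd N")
  case True
  then obtain q where N: "N = q * B.ord x" by (metis dvd_def mult.commute)
  have "B.ord x > 0" using B.ord_ge_1[OF fin x] by simp
  then show ?thesis
    by (simp add: N wreath_pow_mult_ord[OF \<alpha> x] wreath_one fun_eq_iff Ball_def)
next
  case False
  then have "x [^]\<^bsub>B\<^esub> N \<noteq> \<one>\<^bsub>B\<^esub>" using B.pow_eq_id[OF x] by simp
  with False show ?thesis by (simp add: wreath_pow[OF \<alpha> x] wreath_one)
qed

lemma orbit_prod_closed:
  assumes "\<alpha> \<in> carrier B \<rightarrow>\<^sub>E carrier A" "y \<in> carrier B" "b \<in> carrier B"
  shows "orbit_prod A B y \<alpha> b \<in> carrier A"
  unfolding orbit_prod_def using assms by (intro A.seq_prod_closed) (auto simp: PiE_iff)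

lemma orbit_prod_mult_left:
  assumes y: "y \<in> carrier B" and b: "b \<in> carrier B"
    and \<alpha>: "\<And>s::nat. \<alpha> (y [^]\<^bsub>B\<^esub> s \<otimes>\<^bsub>B\<^esub> b) \<in> carrier A"
  shows "orbit_prod A B y \<alpha> (y \<otimes>\<^bsub>B\<^esub> b) = inv\<^bsub>A\<^esub> (\<alpha> b) \<otimes>\<^bsub>A\<^esub> orbit_prod A B y \<alpha> b \<otimes>\<^bsub>A\<^esub> \<alpha> b"
proof -
  define f where "f s = \<alpha> (y [^]\<^bsub>B\<^esub> s \<otimes>\<^bsub>B\<^esub> b)" for s :: nat
  have f: "f s \<in> carrier A" for s using \<alpha> by (simp add: f_def)
  have f0: "f 0 = \<alpha> b" and f_ord: "f (B.ord y) = \<alpha> b" using y b by (simp_all add: f_def)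
  have at_b: "orbit_prod A B y \<alpha> b = seq_prod A f (B.ord y)"
    by (simp add: orbit_prod_def f_def[abs_def])
  have at_yb: "orbit_prod A B y \<alpha> (y \<otimes>\<^bsub>B\<^esub> b) = seq_prod A (\<lambda>s. f (Suc s)) (B.ord y)"
    using y b by (simp add: orbit_prod_def f_def B.m_assoc)
  have "\<alpha> b \<otimes>\<^bsub>A\<^esub> seq_prod A (\<lambda>s. f (Suc s)) (B.ord y) = seq_prod A f (B.ord y) \<otimes>\<^bsub>A\<^esub> \<alpha> b"
    using A.seq_prod_Suc_left[of "B.ord y" f] f by (simp add: f0 f_ord)
  moreover have "seq_prod A f (B.ord y) \<in> carrier A" "seq_prod A (\<lambda>s. f (Suc s)) (B.ord y) \<in> carrier A"
    using f by (simp_all add: A.seq_prod_closed)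
  ultimately show ?thesis
    using f[of 0] by (simp add: at_b at_yb f0 A.m_assoc A.inv_solve_left)
qed

lemma orbit_prod_pow_mult_in:
  assumes y: "y \<in> carrier B" and b: "b \<in> carrier B"
    and \<alpha>: "\<And>s::nat. \<alpha> (y [^]\<^bsub>B\<^esub> s \<otimes>\<^bsub>B\<^esub> b) \<in> carrier A"
    and S: "\<And>g h. g \<in> carrier A \<Longrightarrow> h \<in> S \<Longrightarrow> inv\<^bsub>A\<^esub> g \<otimes>\<^bsub>A\<^esub> h \<otimes>\<^bsub>A\<^esub> g \<in> S"
    and in_S: "orbit_prod A B y \<alpha> b \<in> S"
  shows "orbit_prod A B y \<alpha> (y [^]\<^bsub>B\<^esub> (s::nat) \<otimes>\<^bsub>B\<^esub> b) \<in> S"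
proof (induction s)
  case 0
  then show ?case using b in_S by simp
next
  case (Suc s)
  have "y [^]\<^bsub>B\<^esub> Suc s \<otimes>\<^bsub>B\<^esub> b = y \<otimes>\<^bsub>B\<^esub> (y [^]\<^bsub>B\<^esub> s \<otimes>\<^bsub>B\<^esub> b)"
    using y b by (subst B.nat_pow_Suc2) (simp_all add: B.m_assoc)
  moreover have "\<alpha> (y [^]\<^bsub>B\<^esub> r \<otimes>\<^bsub>B\<^esub> (y [^]\<^bsub>B\<^esub> s \<otimes>\<^bsub>B\<^esub> b)) \<in> carrier A" for r :: nat
    using \<alpha>[of "r + s"] y b by (simp add: B.nat_pow_mult[symmetric] B.m_assoc)
  ultimately show ?case
    using Suc y b \<alpha>[of s] by (simp add: orbit_prod_mult_left S)
qed

lemma orbit_prod_restrict_rcos: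
  assumes finB: "finite (carrier B)" and y: "y \<in> carrier B"
    and C: "C \<in> rcosets\<^bsub>B\<^esub> generate B {y}" and b: "b \<in> C"
  shows "orbit_prod A B y (restrict \<alpha> C) b = orbit_prod A B y \<alpha> b"
  unfolding orbit_prod_def
  by (rule A.seq_prod_cong) (simp add: B.pow_mult_mem_rcos_generate[OF finB y C b])

lemma orbit_prod_in_rcos_iff:
  assumes finB: "finite (carrier B)" and y: "y \<in> carrier B" and t: "t \<in> carrier B"
    and S_conj: "\<And>g h. g \<in> carrier A \<Longrightarrow> h \<in> S \<Longrightarrow> inv\<^bsub>A\<^esub> g \<otimes>\<^bsub>A\<^esub> h \<otimes>\<^bsub>A\<^esub> g \<in> S"
    and \<alpha>: "\<alpha> \<in> (generate B {y} #>\<^bsub>B\<^esub> t) \<rightarrow>\<^sub>E carrier A"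
  shows "(\<forall>b \<in> generate B {y} #>\<^bsub>B\<^esub> t. orbit_prod A B y \<alpha> b \<in> S) \<longleftrightarrow> orbit_prod A B y \<alpha> t \<in> S"
proof -
  let ?C = "generate B {y} #>\<^bsub>B\<^esub> t"
  have C: "?C \<in> rcosets\<^bsub>B\<^esub> generate B {y}" using t by (auto simp: RCOSETS_def)
  have t_C: "t \<in> ?C" using y t by (simp add: B.rcos_self B.generate_is_subgroup)
  have "orbit_prod A B y \<alpha> b \<in> S" if "b \<in> ?C" "orbit_prod A B y \<alpha> t \<in> S" for b
  proof -
    obtain s :: nat where "b = y [^]\<^bsub>B\<^esub> s \<otimes>\<^bsub>B\<^esub> t"
      using \<open>b \<in> ?C\<close> B.bij_betw_pow_rcos_generate[OF finB y t] by (auto simp: bij_betw_def)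
    moreover have "\<alpha> (y [^]\<^bsub>B\<^esub> r \<otimes>\<^bsub>B\<^esub> t) \<in> carrier A" for r :: nat
      using PiE_mem[OF \<alpha> B.pow_mult_mem_rcos_generate[OF finB y C t_C]] .
    ultimately show ?thesis
      using orbit_prod_pow_mult_in[OF y t _ S_conj] that(2) by simp
  qed
  then show ?thesis using t_C by auto
qed

lemma card_orbit_prod_in_rcos:
  assumes finA: "finite (carrier A)" and finB: "finite (carrier B)"
    and y: "y \<in> carrier B" and t: "t \<in> carrier B"
    and S: "S \<subseteq> carrier A"
    and S_conj: "\<And>g h. g \<in> carrier A \<Longrightarrow> h \<in> S \<Longrightarrow> inv\<^bsub>A\<^esub> g \<otimes>\<^bsub>A\<^esub> h \<otimes>\<^bsub>A\<^esub> g \<in> S"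
  shows "card {\<alpha> \<in> (generate B {y} #>\<^bsub>B\<^esub> t) \<rightarrow>\<^sub>E carrier A.
                \<forall>b \<in> generate B {y} #>\<^bsub>B\<^esub> t. orbit_prod A B y \<alpha> b \<in> S}
    = card S * card (carrier A) ^ (B.ord y - 1)"
proof -
  let ?C = "generate B {y} #>\<^bsub>B\<^esub> t" and ?n = "B.ord y"
  let ?h = "\<lambda>s. y [^]\<^bsub>B\<^esub> s \<otimes>\<^bsub>B\<^esub> t"
  have bij: "bij_betw ?h {..<?n} ?C" by (rule B.bij_betw_pow_rcos_generate[OF finB y t])
  have "orbit_prod A B y \<alpha> t = seq_prod A (restrict (\<alpha> \<circ> ?h) {..<?n}) ?n" for \<alpha>
    unfolding orbit_prod_def by (rule A.seq_prod_cong) simp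
  then have "bij_betw (\<lambda>\<alpha>. restrict (\<alpha> \<circ> ?h) {..<?n})
      {\<alpha> \<in> ?C \<rightarrow>\<^sub>E carrier A. \<forall>b\<in>?C. orbit_prod A B y \<alpha> b \<in> S}
      {f \<in> {..<?n} \<rightarrow>\<^sub>E carrier A. seq_prod A f ?n \<in> S}"
    using orbit_prod_in_rcos_iff[OF finB y t S_conj]
    by (intro bij_betw_Collect[OF bij_betw_PiE_reindex[OF bij]]) simp
  then have "card {\<alpha> \<in> ?C \<rightarrow>\<^sub>E carrier A. \<forall>b\<in>?C. orbit_prod A B y \<alpha> b \<in> S}
      = card {f \<in> {..<Suc (?n - 1)} \<rightarrow>\<^sub>E carrier A. seq_prod A f (Suc (?n - 1)) \<in> S}"
    using B.ord_ge_1[OF finB y] by (simp add: bij_betw_same_card)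
  also have "\<dots> = card S * card (carrier A) ^ (?n - 1)"
    by (rule A.card_seq_prod_in[OF finA S])
  finally show ?thesis .
qed

lemma card_orbit_prod_in:
  assumes finA: "finite (carrier A)" and finB: "finite (carrier B)" and y: "y \<in> carrier B"
    and S: "S \<subseteq> carrier A"
    and S_conj: "\<And>g h. g \<in> carrier A \<Longrightarrow> h \<in> S \<Longrightarrow> inv\<^bsub>A\<^esub> g \<otimes>\<^bsub>A\<^esub> h \<otimes>\<^bsub>A\<^esub> g \<in> S"
  shows "card {\<alpha> \<in> carrier B \<rightarrow>\<^sub>E carrier A. \<forall>b\<in>carrier B. orbit_prod A B y \<alpha> b \<in> S}
    = (card S * card (carrier A) ^ (B.ord y - 1)) ^ (card (carrier B) div B.ord y)"
proof -
  let ?H = "generate B {y}"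
  let ?R = "\<lambda>C. {\<alpha> \<in> C \<rightarrow>\<^sub>E carrier A. \<forall>b\<in>C. orbit_prod A B y \<alpha> b \<in> S}"
  have H: "subgroup ?H B" using y by (simp add: B.generate_is_subgroup)
  have cosets: "\<Union>(rcosets\<^bsub>B\<^esub> ?H) = carrier B" "disjoint (rcosets\<^bsub>B\<^esub> ?H)"
    using B.rcosets_part_G[OF H] B.rcos_disjoint[OF H] by simp_all
  have "(\<forall>C\<in>rcosets\<^bsub>B\<^esub> ?H. restrict \<alpha> C \<in> ?R C) \<longleftrightarrow> (\<forall>b\<in>carrier B. orbit_prod A B y \<alpha> b \<in> S)"
    if \<alpha>: "\<alpha> \<in> carrier B \<rightarrow>\<^sub>E carrier A" for \<alpha>
  proof -
    have "(\<forall>C\<in>rcosets\<^bsub>B\<^esub> ?H. restrict \<alpha> C \<in> ?R C)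
        \<longleftrightarrow> (\<forall>C\<in>rcosets\<^bsub>B\<^esub> ?H. \<forall>b\<in>C. orbit_prod A B y \<alpha> b \<in> S)"
      using cosets(1) PiE_mem[OF \<alpha>] orbit_prod_restrict_rcos[OF finB y] by auto
    also have "\<dots> \<longleftrightarrow> (\<forall>b\<in>\<Union>(rcosets\<^bsub>B\<^esub> ?H). orbit_prod A B y \<alpha> b \<in> S)"
      by blast
    finally show ?thesis by (simp only: cosets(1))
  qed
  then have "bij_betw (\<lambda>\<alpha>. \<lambda>C\<in>rcosets\<^bsub>B\<^esub> ?H. restrict \<alpha> C)
      {\<alpha> \<in> carrier B \<rightarrow>\<^sub>E carrier A. \<forall>b\<in>carrier B. orbit_prod A B y \<alpha> b \<in> S}
      {\<phi> \<in> (\<Pi>\<^sub>E C\<in>rcosets\<^bsub>B\<^esub> ?H. C \<rightarrow>\<^sub>E carrier A). \<forall>C\<in>rcosets\<^bsub>B\<^esub> ?H. \<phi> C \<in> ?R C}"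
    by (intro bij_betw_Collect[OF bij_betw_PiE_partition[OF cosets(2,1)]]) simp
  moreover have "{\<phi> \<in> (\<Pi>\<^sub>E C\<in>rcosets\<^bsub>B\<^esub> ?H. C \<rightarrow>\<^sub>E carrier A). \<forall>C\<in>rcosets\<^bsub>B\<^esub> ?H. \<phi> C \<in> ?R C}
      = (\<Pi>\<^sub>E C\<in>rcosets\<^bsub>B\<^esub> ?H. ?R C)"
    by (auto simp: PiE_iff extensional_def)
  ultimately have "card {\<alpha> \<in> carrier B \<rightarrow>\<^sub>E carrier A. \<forall>b\<in>carrier B. orbit_prod A B y \<alpha> b \<in> S}
      = card (\<Pi>\<^sub>E C\<in>rcosets\<^bsub>B\<^esub> ?H. ?R C)"
    by (simp add: bij_betw_same_card)
  also have "\<dots> = (card S * card (carrier A) ^ (B.ord y - 1)) ^ card (rcosets\<^bsub>B\<^esub> ?H)"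
  proof -
    have "finite (rcosets\<^bsub>B\<^esub> ?H)"
      using finB cosets(1) by (metis finite_UnionD)
    moreover have "card (?R C) = card S * card (carrier A) ^ (B.ord y - 1)"
      if "C \<in> rcosets\<^bsub>B\<^esub> ?H" for C
      using that card_orbit_prod_in_rcos[OF finA finB y _ S S_conj] by (auto simp: RCOSETS_def)
    ultimately show ?thesis by (simp add: card_PiE)
  qed
  also have "card (rcosets\<^bsub>B\<^esub> ?H) = card (carrier B) div B.ord y"
    using B.lagrange[OF H] B.generate_pow_card[OF y] B.ord_ge_1[OF finB y]
    by (metis order_def nonzero_mult_div_cancel_right not_one_le_zero)
  finally show ?thesis .
qed

end

section \<open>Finite \<open>p\<close>-groups\<close>

lemma real_pow_le_pow_powi_iff:
  fixes p u f :: nat and k :: int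
  assumes p: "1 < p"
  shows "real (p ^ u) \<le> real (p ^ f) * real p powi (- k) \<longleftrightarrow> int u + k \<le> int f"
proof -
  have "real (p ^ f) * real p powi (- k) = real p powi (int f - k)"
    using p by (simp add: power_int_diff power_int_minus_divide)
  moreover have "real (p ^ u) = real p powi int u" by simp
  moreover have "real p powi int u \<le> real p powi (int f - k) \<longleftrightarrow> int u \<le> int f - k"
  proof -
    have p': "1 < real p" using p by simp
    show ?thesis
      using power_int_strict_increasing[OF _ p'] power_int_increasing[OF _ less_imp_le[OF p']]
      by (meson not_le)
  qed
  ultimately show ?thesis by linarith
qed

text \<open>The set is empty for negative j, so that r_ratio_eq_card_ppow_torsion holds for every
  integer k.\<close>

definition ppow_torsion :: "('a, 'b) monoid_scheme \<Rightarrow> nat \<Rightarrow> int \<Rightarrow> 'a set" where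
  "ppow_torsion G p j = {x \<in> carrier G. 0 \<le> j \<and> x [^]\<^bsub>G\<^esub> (p ^ nat j) = \<one>\<^bsub>G\<^esub>}"

context group
begin

lemma ppow_torsion_subset: "ppow_torsion G p j \<subseteq> carrier G"
  by (auto simp: ppow_torsion_def)

lemma ppow_torsion_conj_closed:
  assumes "g \<in> carrier G" "h \<in> ppow_torsion G p j"
  shows "inv g \<otimes> h \<otimes> g \<in> ppow_torsion G p j"
  using assms by (auto simp: ppow_torsion_def conj_pow)

lemma max_elem_ord_attained:
  assumes "finite (carrier G)"
  shows "\<exists>x\<in>carrier G. ord x = max_elem_ord G"
proof -
  have "Max (ord ` carrier G) \<in> ord ` carrier G"
    using assms by (intro Max_in) auto
  then show ?thesis by (auto simp: max_elem_ord_def)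
qed

lemma ord_le_max_elem_ord:
  assumes "finite (carrier G)" "x \<in> carrier G"
  shows "ord x \<le> max_elem_ord G"
  using assms by (simp add: max_elem_ord_def)

lemma max_elem_ord_eqI:
  assumes "finite (carrier G)" "\<And>x. x \<in> carrier G \<Longrightarrow> ord x \<le> N"
    and "x\<^sub>0 \<in> carrier G" "ord x\<^sub>0 = N"
  shows "max_elem_ord G = N"
  unfolding max_elem_ord_def using assms by (intro Max_eqI) auto

end

locale finite_pgroup = group +
  fixes p c :: nat
  assumes prime_p: "Factorial_Ring.prime p" and card_carrier: "card (carrier G) = p ^ c"

begin

lemma one_less_p: "1 < p"
  using prime_p by (rule prime_gt_1_nat)

lemma finite_carrier: "finite (carrier G)"
  using card_carrier one_less_p by (intro card_ge_0_finite) simp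

lemma ord_eq_prime_pow:
  assumes "x \<in> carrier G"
  shows "\<exists>u. ord x = p ^ u"
proof -
  have "ord x dvd p ^ c"
    using ord_dvd_group_order[OF assms] card_carrier by (simp add: order_def)
  then show ?thesis using divides_primepow_nat[OF prime_p] by blast
qed

lemma mem_ppow_torsion_iff:
  assumes "x \<in> carrier G" "ord x = p ^ u"
  shows "x \<in> ppow_torsion G p j \<longleftrightarrow> int u \<le> j"
  using assms one_less_p by (auto simp: ppow_torsion_def pow_eq_id dvd_power_iff_le)

lemma ord_eq_prime_pow_le:
  assumes max: "max_elem_ord G = p ^ f" and x: "x \<in> carrier G"
  shows "\<exists>u\<le>f. ord x = p ^ u"
proof -
  obtain u where u: "ord x = p ^ u" using ord_eq_prime_pow[OF x] by blast
  have "p ^ u \<le> p ^ f" using ord_le_max_elem_ord[OF finite_carrier x] u max by simp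
  then have "u \<le> f" using one_less_p by simp
  with u show ?thesis by blast
qed

lemma ppow_torsion_eq_carrier:
  assumes max: "max_elem_ord G = p ^ f" and j: "int f \<le> j"
  shows "ppow_torsion G p j = carrier G"
proof -
  have "x \<in> ppow_torsion G p j" if x: "x \<in> carrier G" for x
    using ord_eq_prime_pow_le[OF max x] mem_ppow_torsion_iff[OF x] j by force
  then show ?thesis using ppow_torsion_subset by blast
qed

lemma r_ratio_eq_card_ppow_torsion:
  assumes max: "max_elem_ord G = p ^ f"
  shows "r_ratio p G k = card (ppow_torsion G p (int f - k)) / card (carrier G)"
proof -
  have "real (ord x) \<le> real (max_elem_ord G) * real p powi - k \<longleftrightarrow> x \<in> ppow_torsion G p (int f - k)"
    if x: "x \<in> carrier G" for x
  proof -
    obtain u where u: "ord x = p ^ u" using ord_eq_prime_pow[OF x] by blast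
    show ?thesis
      using real_pow_le_pow_powi_iff[OF one_less_p, of u f k] mem_ppow_torsion_iff[OF x u] u max
      by (simp; linarith)
  qed
  then have "{x \<in> carrier G. real (ord x) \<le> real (max_elem_ord G) * real p powi - k}
      = ppow_torsion G p (int f - k)"
    by (auto simp: ppow_torsion_def)
  then show ?thesis by (simp add: r_ratio_def)
qed

lemma r_ratio_diff_eq_card_ord:
  assumes max: "max_elem_ord G = p ^ f" and i: "i \<le> f"
  shows "r_ratio p G (int i) - r_ratio p G (int i + 1)
    = card {x \<in> carrier G. ord x = p ^ (f - i)} / card (carrier G)"
proof -
  let ?T = "\<lambda>i. ppow_torsion G p (int f - int i)"
  have "x \<in> ?T i - ?T (Suc i) \<longleftrightarrow> ord x = p ^ (f - i)"
    and "x \<in> ?T (Suc i) \<longrightarrow> x \<in> ?T i" if x: "x \<in> carrier G" for x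
  proof -
    obtain u where u: "ord x = p ^ u" using ord_eq_prime_pow[OF x] by blast
    have "x \<in> ?T i - ?T (Suc i) \<longleftrightarrow> int u \<le> int f - int i \<and> \<not> int u \<le> int f - int (Suc i)"
      using mem_ppow_torsion_iff[OF x u] by simp
    also have "\<dots> \<longleftrightarrow> u = f - i" using i by arith
    also have "\<dots> \<longleftrightarrow> ord x = p ^ (f - i)" using u one_less_p by simp
    finally show "x \<in> ?T i - ?T (Suc i) \<longleftrightarrow> ord x = p ^ (f - i)" .
    show "x \<in> ?T (Suc i) \<longrightarrow> x \<in> ?T i"
      using mem_ppow_torsion_iff[OF x u] by simp
  qed
  then have "{x \<in> carrier G. ord x = p ^ (f - i)} = ?T i - ?T (Suc i)" "?T (Suc i) \<subseteq> ?T i"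
    using ppow_torsion_subset by blast+
  moreover have "finite (?T i)" using finite_carrier by (simp add: ppow_torsion_def)
  ultimately have "real (card {x \<in> carrier G. ord x = p ^ (f - i)})
      = real (card (?T i)) - real (card (?T (Suc i)))"
    by (simp add: card_Diff_subset card_mono of_nat_diff finite_subset)
  moreover have "r_ratio p G (int i) - r_ratio p G (int i + 1)
      = (real (card (?T i)) - real (card (?T (Suc i)))) / card (carrier G)"
    unfolding r_ratio_eq_card_ppow_torsion[OF max] by (simp add: diff_divide_distrib add.commute)
  ultimately show ?thesis by simp
qed

lemma sum_over_ord_classes:
  fixes h :: "'a \<Rightarrow> real" and v :: "nat \<Rightarrow> real"
  assumes max: "max_elem_ord G = p ^ f"
    and h: "\<And>x i. x \<in> carrier G \<Longrightarrow> i \<le> f \<Longrightarrow> ord x = p ^ (f - i) \<Longrightarrow> h x = v i"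
  shows "(\<Sum>x\<in>carrier G. h x) / card (carrier G)
    = (\<Sum>i=0..f. (r_ratio p G (int i) - r_ratio p G (int i + 1)) * v i)"
proof -
  have "h x = (\<Sum>i=0..f. if ord x = p ^ (f - i) then v i else 0)" if x: "x \<in> carrier G" for x
  proof -
    obtain u where u: "u \<le> f" "ord x = p ^ u" using ord_eq_prime_pow_le[OF max x] by blast
    have "ord x = p ^ (f - i) \<longleftrightarrow> i = f - u" if "i \<in> {0..f}" for i
      using that u one_less_p by auto
    then have "(\<Sum>i=0..f. if ord x = p ^ (f - i) then v i else 0) = (\<Sum>i=0..f. if i = f - u then v i else 0)"
      by (intro sum.cong) auto
    also have "\<dots> = h x" using h[OF x, of "f - u"] u by simp
    finally show ?thesis by simp
  qed
  then have "(\<Sum>x\<in>carrier G. h x) = (\<Sum>i=0..f. \<Sum>x\<in>carrier G. if ord x = p ^ (f - i) then v i else 0)"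
    by (simp add: sum.swap[of _ "{0..f}"])
  also have "\<dots> = (\<Sum>i=0..f. card {x \<in> carrier G. ord x = p ^ (f - i)} * v i)"
    using finite_carrier by (simp add: sum.inter_filter[symmetric])
  finally show ?thesis
    by (simp add: sum_divide_distrib r_ratio_diff_eq_card_ord[OF max])
qed

end

section \<open>Wreath products of \<open>p\<close>-groups\<close>

context group_pair
begin

lemma orbit_prod_point_mass:
  assumes finB: "finite (carrier B)" and y: "y \<in> carrier B" and a: "a \<in> carrier A"
  shows "orbit_prod A B y (\<lambda>b\<in>carrier B. if b = \<one>\<^bsub>B\<^esub> then a else \<one>\<^bsub>A\<^esub>) \<one>\<^bsub>B\<^esub> = a"
  unfolding orbit_prod_def
proof (subst A.seq_prod_eq_first)
  fix s :: nat assume "0 < s" "s < B.ord y"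
  then have "y [^]\<^bsub>B\<^esub> s \<noteq> \<one>\<^bsub>B\<^esub>"
    using B.pow_eq_id[OF y, of s] by (auto dest: dvd_imp_le)
  then show "(\<lambda>b\<in>carrier B. if b = \<one>\<^bsub>B\<^esub> then a else \<one>\<^bsub>A\<^esub>) (y [^]\<^bsub>B\<^esub> s \<otimes>\<^bsub>B\<^esub> \<one>\<^bsub>B\<^esub>) = \<one>\<^bsub>A\<^esub>"
    using y by simp
qed (use finB y a B.ord_ge_1[OF finB y] in simp_all)

lemma mem_ppow_torsion_wreath_iff:
  assumes p: "1 < p" and finB: "finite (carrier B)"
    and \<alpha>: "\<alpha> \<in> carrier B \<rightarrow>\<^sub>E carrier A" and x: "x \<in> carrier B" and m: "B.ord x = p ^ m"
  shows "(\<alpha>, x) \<in> ppow_torsion (wreath A B) p j \<longleftrightarrow>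
    (\<forall>b\<in>carrier B. orbit_prod A B (inv\<^bsub>B\<^esub> x) \<alpha> b \<in> ppow_torsion A p (j - int m))"
proof (cases "int m \<le> j")
  case True
  have "p ^ nat j = p ^ nat (j - int m) * p ^ m"
    using True by (simp flip: power_add) (simp add: nat_diff_distrib)
  then have "B.ord x dvd p ^ nat j" "p ^ nat j div B.ord x = p ^ nat (j - int m)"
    using p by (simp_all add: m)
  then show ?thesis
    using True wreath_pow_eq_one_iff[OF finB \<alpha> x] \<alpha> x orbit_prod_closed[OF \<alpha>]
    by (auto simp: ppow_torsion_def wreath_carrier)
next
  case False
  have "\<not> (\<alpha>, x) [^]\<^bsub>wreath A B\<^esub> (p ^ nat j) = \<one>\<^bsub>wreath A B\<^esub>" if "0 \<le> j"
  proof -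
    have "\<not> p ^ m dvd p ^ nat j" using False that p by (simp add: dvd_power_iff_le)
    then show ?thesis using wreath_pow_eq_one_iff[OF finB \<alpha> x] m by simp
  qed
  moreover have "\<one>\<^bsub>B\<^esub> \<in> carrier B" by simp
  ultimately show ?thesis using False by (auto simp: ppow_torsion_def)
qed

lemma card_wreath_fiber_ppow_torsion:
  assumes p: "1 < p" and finA: "finite (carrier A)" and finB: "finite (carrier B)"
    and x: "x \<in> carrier B" and m: "B.ord x = p ^ m"
  shows "card {\<alpha> \<in> carrier B \<rightarrow>\<^sub>E carrier A. (\<alpha>, x) \<in> ppow_torsion (wreath A B) p j}
    = (card (ppow_torsion A p (j - int m)) * card (carrier A) ^ (p ^ m - 1)) ^ (card (carrier B) div p ^ m)"
proof -
  have "{\<alpha> \<in> carrier B \<rightarrow>\<^sub>E carrier A. (\<alpha>, x) \<in> ppow_torsion (wreath A B) p j}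
      = {\<alpha> \<in> carrier B \<rightarrow>\<^sub>E carrier A.
           \<forall>b\<in>carrier B. orbit_prod A B (inv\<^bsub>B\<^esub> x) \<alpha> b \<in> ppow_torsion A p (j - int m)}"
    using mem_ppow_torsion_wreath_iff[OF p finB _ x m] by blast
  also have "card \<dots> = (card (ppow_torsion A p (j - int m)) * card (carrier A) ^ (p ^ m - 1))
      ^ (card (carrier B) div p ^ m)"
    using card_orbit_prod_in[OF finA finB _ A.ppow_torsion_subset A.ppow_torsion_conj_closed] x m
    by simp
  finally show ?thesis .
qed

end

locale wreath_pgroups = group_pair A B + A: finite_pgroup A p a + B: finite_pgroup B p b
  for A :: "('a, 'c) monoid_scheme" and B :: "('b, 'd) monoid_scheme" and p a b :: nat +
  fixes d e :: nat
  assumes max_A: "max_elem_ord A = p ^ d" and max_B: "max_elem_ord B = p ^ e"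
begin

lemma wreath_finite_pgroup: "finite_pgroup (wreath A B) p (a * p ^ b + b)"
proof (rule finite_pgroup.intro[OF wreath_group])
  show "finite_pgroup_axioms (wreath A B) p (a * p ^ b + b)"
    using A.prime_p card_wreath[OF A.finite_carrier B.finite_carrier]
    by unfold_locales (simp_all add: A.card_carrier B.card_carrier power_mult power_add)
qed

sublocale W: finite_pgroup "wreath A B" p "a * p ^ b + b"
  by (rule wreath_finite_pgroup)

lemma e_le_b: "e \<le> b"
proof -
  obtain x where x: "x \<in> carrier B" "B.ord x = p ^ e"
    using B.max_elem_ord_attained[OF B.finite_carrier] max_B by auto
  have "p ^ e dvd p ^ b"
    using B.ord_dvd_group_order[OF x(1)] x(2) B.card_carrier by (simp add: order_def)
  then show ?thesis using B.one_less_p by (simp add: dvd_power_iff_le)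
qed

lemma ord_wreath_le:
  assumes g: "g \<in> carrier (wreath A B)"
  shows "W.ord g \<le> p ^ (d + e)"
proof -
  obtain \<alpha> x where g_eq: "g = (\<alpha>, x)" and \<alpha>: "\<alpha> \<in> carrier B \<rightarrow>\<^sub>E carrier A" and x: "x \<in> carrier B"
    using g by (auto simp: wreath_carrier)
  obtain m where m: "m \<le> e" "B.ord x = p ^ m" using B.ord_eq_prime_pow_le[OF max_B x] by blast
  have "ppow_torsion A p (int (d + e) - int m) = carrier A"
    using m(1) by (intro A.ppow_torsion_eq_carrier[OF max_A]) simp
  then have "g \<in> ppow_torsion (wreath A B) p (int (d + e))"
    using mem_ppow_torsion_wreath_iff[OF A.one_less_p B.finite_carrier \<alpha> x m(2)] \<alpha> x
    by (simp add: g_eq orbit_prod_closed)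
  moreover obtain u where u: "W.ord g = p ^ u" using W.ord_eq_prime_pow[OF g] by blast
  ultimately have "u \<le> d + e" using W.mem_ppow_torsion_iff[OF g u] by simp
  then show ?thesis using u A.one_less_p by simp
qed

lemma ord_wreath_attained: "\<exists>g\<in>carrier (wreath A B). W.ord g = p ^ (d + e)"
proof -
  obtain x where x: "x \<in> carrier B" "B.ord x = p ^ e"
    using B.max_elem_ord_attained[OF B.finite_carrier] max_B by auto
  obtain a where a: "a \<in> carrier A" "A.ord a = p ^ d"
    using A.max_elem_ord_attained[OF A.finite_carrier] max_A by auto
  define \<alpha> where "\<alpha> = (\<lambda>b\<in>carrier B. if b = \<one>\<^bsub>B\<^esub> then a else \<one>\<^bsub>A\<^esub>)"
  have \<alpha>: "\<alpha> \<in> carrier B \<rightarrow>\<^sub>E carrier A" using a by (simp add: \<alpha>_def)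
  have g: "(\<alpha>, x) \<in> carrier (wreath A B)" using \<alpha> x by (simp add: wreath_carrier)
  obtain w where w: "W.ord (\<alpha>, x) = p ^ w" using W.ord_eq_prime_pow[OF g] by blast
  have "orbit_prod A B (inv\<^bsub>B\<^esub> x) \<alpha> \<one>\<^bsub>B\<^esub> \<in> ppow_torsion A p (int w - int e)"
    using W.mem_ppow_torsion_iff[OF g w, of "int w"]
      mem_ppow_torsion_wreath_iff[OF A.one_less_p B.finite_carrier \<alpha> x] by simp
  then have "a \<in> ppow_torsion A p (int w - int e)"
    using orbit_prod_point_mass[OF B.finite_carrier _ a(1), of "inv\<^bsub>B\<^esub> x"] x by (simp add: \<alpha>_def)
  then have "d + e \<le> w" using A.mem_ppow_torsion_iff[OF a] by simp
  moreover have "w \<le> d + e" using ord_wreath_le[OF g] w A.one_less_p by simp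
  ultimately show ?thesis using g w by (intro bexI[of _ "(\<alpha>, x)"]) simp_all
qed

lemma max_elem_ord_wreath: "max_elem_ord (wreath A B) = p ^ (d + e)"
  using ord_wreath_attained W.max_elem_ord_eqI[OF W.finite_carrier ord_wreath_le] by blast

lemma wreath_fiber_ratio:
  assumes x: "x \<in> carrier B" and i: "i \<le> e" and ord_x: "B.ord x = p ^ (e - i)"
  shows "real (card {\<alpha> \<in> carrier B \<rightarrow>\<^sub>E carrier A. (\<alpha>, x) \<in> ppow_torsion (wreath A B) p (int (d + e) - k)})
      / real (card (carrier A)) ^ card (carrier B)
    = r_ratio p A (k - int i) ^ p ^ (b - e + i)"
proof -
  let ?n = "p ^ (e - i)" and ?q = "p ^ (b - e + i)"
  let ?s = "card (ppow_torsion A p (int d - (k - int i)))" and ?c = "card (carrier A)"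
  have nq: "?n * ?q = card (carrier B)"
    using i e_le_b by (simp add: B.card_carrier flip: power_add)
  have "card {\<alpha> \<in> carrier B \<rightarrow>\<^sub>E carrier A. (\<alpha>, x) \<in> ppow_torsion (wreath A B) p (int (d + e) - k)}
      = (?s * ?c ^ (?n - 1)) ^ ?q"
    using card_wreath_fiber_ppow_torsion[OF A.one_less_p A.finite_carrier B.finite_carrier x ord_x]
      i nq[symmetric] A.one_less_p by (simp add: algebra_simps)
  moreover have "real ((?s * ?c ^ (?n - 1)) ^ ?q) / real ?c ^ (?n * ?q) = (real ?s / real ?c) ^ ?q"
  proof -
    have "?n * ?q = ?q + (?n - 1) * ?q" using A.one_less_p by (simp add: algebra_simps)
    moreover have "?c > 0" using A.card_carrier A.one_less_p by simp
    ultimately show ?thesis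
      by (simp add: power_add power_mult_distrib power_divide power_mult[symmetric])
  qed
  moreover have "r_ratio p A (k - int i) = real ?s / real ?c"
    by (simp add: A.r_ratio_eq_card_ppow_torsion[OF max_A])
  ultimately show ?thesis by (simp add: nq)
qed

lemma r_ratio_wreath:
  "r_ratio p (wreath A B) k =
     (\<Sum>i=0..e. (r_ratio p B (int i) - r_ratio p B (int i + 1)) * r_ratio p A (k - int i) ^ p ^ (b - e + i))"
proof -
  let ?T = "ppow_torsion (wreath A B) p (int (d + e) - k)"
  let ?fiber = "\<lambda>x. {\<alpha> \<in> carrier B \<rightarrow>\<^sub>E carrier A. (\<alpha>, x) \<in> ?T}"
  let ?cA = "real (card (carrier A)) ^ card (carrier B)" and ?cB = "real (card (carrier B))"
  have "card ?T = (\<Sum>x\<in>carrier B. card (?fiber x))"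
    using W.ppow_torsion_subset A.finite_carrier B.finite_carrier
    by (intro card_eq_sum_card_fibers) (auto simp: wreath_carrier finite_PiE)
  then have "r_ratio p (wreath A B) k = (\<Sum>x\<in>carrier B. card (?fiber x)) / (?cA * ?cB)"
    using W.r_ratio_eq_card_ppow_torsion[OF max_elem_ord_wreath, of k]
      card_wreath[OF A.finite_carrier B.finite_carrier]
    by simp
  also have "\<dots> = (\<Sum>x\<in>carrier B. card (?fiber x) / ?cA) / ?cB"
    by (simp add: sum_divide_distrib)
  also have "\<dots> = (\<Sum>i=0..e. (r_ratio p B (int i) - r_ratio p B (int i + 1))
                      * r_ratio p A (k - int i) ^ p ^ (b - e + i))"
    by (rule B.sum_over_ord_classes[OF max_B]) (rule wreath_fiber_ratio)
  finally show ?thesis .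
qed

end

theorem theorem5:
  fixes A :: "('a, 'c) monoid_scheme" and B :: "('b, 'd) monoid_scheme"
    and p a b d e :: nat
  assumes "Factorial_Ring.prime p"
    and "group A" and "group B"
    and "card (carrier A) = p ^ a" and "card (carrier B) = p ^ b"
    and "a \<ge> 1" and "b \<ge> 1"
    and "max_elem_ord A = p ^ d" and "max_elem_ord B = p ^ e"
  shows "max_elem_ord (wreath A B) = p ^ (d + e)
    \<and> (\<forall>k::int. r_ratio p (wreath A B) k =
         (\<Sum>i=0..e. (r_ratio p B (int i) - r_ratio p B (int i + 1))
                      * (r_ratio p A (k - int i)) ^ (p ^ (b - e + i))))"
proof -
  interpret wreath_pgroups A B p a b d e
    using assms by (simp add: wreath_pgroups_def wreath_pgroups_axioms_def group_pair_def
        finite_pgroup_def finite_pgroup_axioms_def)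
  show ?thesis using max_elem_ord_wreath r_ratio_wreath by blast
qed

end
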